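(* Let $\mathcal{B}_t(x)$ denote the generalized binomial series, defined for real $t$ by $\mathcal{B}_t(x)^r=\sum_{k\ge0}\binom{tk+r}{k}\frac{r}{tk+r}x^k$ for all real $r$. Then $\mathcal{B}_3(x)$, the power series solution of $X=1+xX^3$, satisfies $$\mathcal{B}_3(x)=\mathcal{B}_{3/2}(x^{1/2})^{1/2}\,\mathcal{B}_{3/2}(-x^{1/2})^{1/2}.$$ Moreover, the two other roots $\sigma_1,\sigma_2$ of $xX^3-X+1=0$ satisfy $x^{1/2}\sigma_1=-\mathcal{B}_{3/2}(-x^{1/2})^{-1/2}$ and $x^{1/2}\sigma_2=\mathcal{B}_{3/2}(x^{1/2})^{-1/2}$, so that $xX^3-X+1=x(X-\mathcal{B}_3(x))(X-\sigma_1)(X-\sigma_2)$.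
   Context: Here $\binom{a}{k}$ for real $a$ denotes the usual generalized binomial coefficient $a(a-1)\cdots(a-k+1)/k!$. *)

theory Defs
  imports Complex_Main "HOL-Computational_Algebra.Formal_Laurent_Series"
    "HOL-Computational_Algebra.Polynomial"
begin

definition gen_binom_series :: "real \<Rightarrow> real \<Rightarrow> real fps" where
  "gen_binom_series t r =
     Abs_fps (\<lambda>k. ((t * real k + r) gchoose k) * r / (t * real k + r))"

end

(*
  The coefficients A_k(r) = (r/k) binom(tk + r - 1, k - 1) of B_t(x)^r are polynomials in r.
  They satisfy the Rothe-Hagen convolution identity  sum_i A_i(r) A_(n-i)(s) = A_n(r + s),
  proved by induction on n: the defect is a polynomial in s which the induction hypothesis
  makes 1-periodic, so it vanishes.  Hence B_t^r B_t^s = B_t^(r+s), and A_(k+1)(1) = A_k(t)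
  gives B_t = 1 + x B_t^t.  So B_3 solves X = 1 + x X^3, P = B_(3/2)^(1/2) solves
  P^2 = 1 + x P^3, and C = 1/P = B_(3/2)^(-1/2) solves C = C^3 + x.  The series P(x) and P(-x)
  solve conjugate equations, which forces P(x) P(-x) to solve X = 1 + x^2 X^3; this has a unique
  power series solution, namely B_3(x^2).  In the variable x^(1/2), both x^(-1/2) C(x^(1/2)) and
  -x^(-1/2) C(-x^(1/2)) are roots of x X^3 - X + 1; their x^(-1/2)-coefficients are 1 and -1,
  that of B_3 is 0, so the three roots are distinct and Vieta's formulas give the factorisation.
*)

theory Submission
  imports Defs "HOL-Analysis.Weierstrass_Theorems"
begin

(* HOL-Analysis also uses $ for vector indexing; here it always means fps_nth. *)
unbundle no vec_syntax

(* Equal to binom(tk + r, k) r / (tk + r) whenever tk + r \<noteq> 0, but free of that division,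
   hence a polynomial in r. *)
definition gen_binom_coeff :: "real \<Rightarrow> nat \<Rightarrow> real \<Rightarrow> real" where
  "gen_binom_coeff t k r =
     (if k = 0 then 1 else r / real k * ((t * real k + r - 1) gchoose (k - 1)))"

lemma gen_binom_coeff_0 [simp]: "gen_binom_coeff t 0 r = 1"
  by (simp add: gen_binom_coeff_def)

lemma gen_binom_coeff_Suc_at_0 [simp]: "gen_binom_coeff t (Suc k) 0 = 0"
  by (simp add: gen_binom_coeff_def)

lemma real_polynomial_function_gen_binom_coeff:
  "real_polynomial_function (gen_binom_coeff t k)"
proof (cases k)
  case 0
  then have "gen_binom_coeff t k = (\<lambda>r. 1)" by (simp add: fun_eq_iff)
  then show ?thesis by auto
next
  case (Suc j)
  obtain p where p: "real_polynomial_function p" "\<And>x. x gchoose j = p x"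
    using real_polynomial_function_gchoose [of j] by blast
  have "real_polynomial_function (p \<circ> (\<lambda>r. r + (t * real k - 1)))"
    using p(1) by (intro real_polynomial_function_compose) auto
  then have "real_polynomial_function (\<lambda>r. r / real k * p (r + (t * real k - 1)))"
    using real_polynomial_function_eq [of "\<lambda>r::real. r"]
    by (auto simp: o_def intro!: real_polynomial_function_divide)
  moreover have "gen_binom_coeff t k = (\<lambda>r. r / real k * p (r + (t * real k - 1)))"
    using Suc by (auto simp: gen_binom_coeff_def p(2) [symmetric] algebra_simps)
  ultimately show ?thesis by simp
qed

lemma gen_binom_coeff_Suc_diff:
  "gen_binom_coeff t (Suc k) (y + 1) - gen_binom_coeff t (Suc k) y = gen_binom_coeff t k (y + t)"
proof (cases k)
  case 0
  then show ?thesis by (simp add: gen_binom_coeff_def)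
next
  case (Suc j)
  define n where "n = Suc k"
  define b where "b = t * real n + y - 1"
  define g where "g = b gchoose j"
  define h where "h = b gchoose Suc j"
  have pascal: "(b + 1) gchoose Suc j = g + h"
    by (simp add: g_def h_def gbinomial_Suc_Suc)
  have h: "real (Suc j) * h = (b - real j) * g"
    using gbinomial_mult_1 [of b j] by (simp add: g_def h_def algebra_simps)
  have lhs: "gen_binom_coeff t n (y + 1) - gen_binom_coeff t n y = ((y + 1) * g + h) / real n"
    using Suc pascal by (simp add: gen_binom_coeff_def n_def b_def h_def algebra_simps)
      (simp add: field_simps)
  have rhs: "gen_binom_coeff t k (y + t) = (y + t) / real (Suc j) * g"
    using Suc by (simp add: gen_binom_coeff_def g_def b_def n_def algebra_simps)
  have "((y + 1) * g + h) / real n = (y + t) / real (Suc j) * g"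
    using h by (simp add: field_simps n_def Suc b_def)
  then show ?thesis using lhs rhs by (simp add: n_def)
qed

lemma gen_binom_coeff_Suc_at_1: "gen_binom_coeff t (Suc k) 1 = gen_binom_coeff t k t"
proof (cases k)
  case 0
  then show ?thesis by (simp add: gen_binom_coeff_def)
next
  case (Suc j)
  define a where "a = t * real (Suc k)"
  have "gen_binom_coeff t (Suc k) 1 = (a gchoose Suc j) / real (Suc k)"
    using Suc by (simp add: gen_binom_coeff_def a_def)
  also have "\<dots> = t / real (Suc j) * ((a - 1) gchoose j)"
    using gbinomial_absorption [of j a] by (simp add: a_def field_simps del: of_nat_Suc)
  also have "\<dots> = gen_binom_coeff t k t"
    using Suc by (simp add: gen_binom_coeff_def a_def algebra_simps)
  finally show ?thesis .
qed

lemma real_polynomial_function_periodic: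
  fixes f :: "real \<Rightarrow> real"
  assumes "real_polynomial_function f" and "\<And>y. f (y + 1) = f y"
  shows "f y = f 0"
proof -
  obtain a n where a: "(\<lambda>x. f x - f 0) = (\<lambda>x. \<Sum>i\<le>n. a i * x ^ i)"
    using real_polynomial_function_imp_sum assms(1) by blast
  have "f (real m) = f 0" for m
    by (induction m) (simp_all add: assms(2) [of "real _", simplified add.commute])
  then have "range real \<subseteq> {x. (\<Sum>i\<le>n. a i * x ^ i) = 0}"
    by (auto simp: fun_cong [OF a, symmetric])
  then have "infinite {x::real. (\<Sum>i\<le>n. a i * x ^ i) = 0}"
    using infinite_UNIV_nat range_inj_infinite inj_of_nat finite_subset by metis
  then have "\<forall>i\<le>n. a i = 0"
    using polyfun_finite_roots by blast
  then show ?thesis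
    using fun_cong [OF a, of y] by simp
qed

lemma gen_binom_coeff_convolution:
  "(\<Sum>i\<le>n. gen_binom_coeff t i r * gen_binom_coeff t (n - i) s) = gen_binom_coeff t n (r + s)"
proof (induction n arbitrary: s)
  case 0
  then show ?case by simp
next
  case (Suc n)
  define D where "D s =
    (\<Sum>i\<le>Suc n. gen_binom_coeff t i r * gen_binom_coeff t (Suc n - i) s)
      - gen_binom_coeff t (Suc n) (r + s)" for s
  have periodic: "D (s + 1) = D s" for s
  proof -
    have "D (s + 1) - D s =
      (\<Sum>i\<le>n. gen_binom_coeff t i r *
         (gen_binom_coeff t (Suc (n - i)) (s + 1) - gen_binom_coeff t (Suc (n - i)) s))
        - (gen_binom_coeff t (Suc n) (r + s + 1) - gen_binom_coeff t (Suc n) (r + s))"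
      by (simp add: D_def Suc_diff_le sum_subtractf right_diff_distrib add.assoc)
    also have "\<dots> =
      (\<Sum>i\<le>n. gen_binom_coeff t i r * gen_binom_coeff t (n - i) (s + t))
        - gen_binom_coeff t n (r + s + t)"
      by (simp only: gen_binom_coeff_Suc_diff)
    also have "\<dots> = 0"
      using Suc.IH [of "s + t"] by (simp add: add.assoc)
    finally show ?thesis by simp
  qed
  have "real_polynomial_function D"
  proof -
    have "real_polynomial_function (gen_binom_coeff t (Suc n) \<circ> (\<lambda>s. r + s))"
      using real_polynomial_function_gen_binom_coeff by (intro real_polynomial_function_compose) auto
    moreover have "real_polynomial_function (\<lambda>s. c * gen_binom_coeff t k s)" for c k
      using polynomial_function_mult [of "\<lambda>s. c" "gen_binom_coeff t k"]
        real_polynomial_function_gen_binom_coeff by (simp add: real_polynomial_function_eq)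
    ultimately show ?thesis
      unfolding D_def o_def by (intro real_polynomial_function_diff real_polynomial_function_sum) auto
  qed
  then have "D s = D 0"
    using periodic by (rule real_polynomial_function_periodic)
  also have "D 0 = 0"
    by (simp add: D_def Suc_diff_le)
  finally show ?case by (simp add: D_def)
qed

definition gen_binom_fps :: "real \<Rightarrow> real \<Rightarrow> real fps" where
  "gen_binom_fps t r = Abs_fps (\<lambda>k. gen_binom_coeff t k r)"

lemma gen_binom_fps_add: "gen_binom_fps t (r + s) = gen_binom_fps t r * gen_binom_fps t s"
  by (simp add: fps_eq_iff gen_binom_fps_def fps_mult_nth atLeast0AtMost gen_binom_coeff_convolution)

lemma gen_binom_fps_0: "gen_binom_fps t 0 = 1"
  by (simp add: fps_eq_iff gen_binom_fps_def gen_binom_coeff_def)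

lemma gen_binom_fps_power: "gen_binom_fps t r ^ n = gen_binom_fps t (real n * r)"
  by (induction n) (simp_all add: gen_binom_fps_0 gen_binom_fps_add algebra_simps)

lemma gen_binom_fps_1: "gen_binom_fps t 1 = 1 + fps_X * gen_binom_fps t t"
proof (rule fps_ext)
  fix k
  show "gen_binom_fps t 1 $ k = (1 + fps_X * gen_binom_fps t t) $ k"
    by (cases k) (simp_all add: gen_binom_fps_def gen_binom_coeff_Suc_at_1)
qed

lemma gen_binom_fps_equation:
  assumes "real m * r = t" and "real n * r = 1"
  shows "gen_binom_fps t r ^ n = 1 + fps_X * gen_binom_fps t r ^ m"
  using gen_binom_fps_1 [of t] by (simp add: gen_binom_fps_power assms)

lemma gen_binom_fps_nth_0 [simp]: "gen_binom_fps t r $ 0 = 1"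
  by (simp add: gen_binom_fps_def)

lemma gen_binom_series_eq_fps:
  assumes "\<And>k. t * real k + r \<noteq> 0"
  shows "gen_binom_series t r = gen_binom_fps t r"
proof (rule fps_ext)
  fix k
  show "gen_binom_series t r $ k = gen_binom_fps t r $ k"
  proof (cases k)
    case 0
    then show ?thesis using assms [of 0] by (simp add: gen_binom_series_def gen_binom_fps_def)
  next
    case (Suc j)
    define w where "w = t * real k + r"
    have "w \<noteq> 0" using assms by (simp add: w_def)
    then have "(w gchoose Suc j) * r / w = r / real (Suc j) * ((w - 1) gchoose j)"
      using gbinomial_absorption [of j w] by (simp add: field_simps del: of_nat_Suc)
    then show ?thesis
      using Suc by (simp add: gen_binom_series_def gen_binom_fps_def gen_binom_coeff_def w_def
          del: of_nat_Suc)
  qed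
qed

lemma gen_binom_series_eq_fps_nonneg:
  assumes "t \<ge> 0" and "r \<noteq> 0" and "t + r > 0"
  shows "gen_binom_series t r = gen_binom_fps t r"
proof (rule gen_binom_series_eq_fps)
  fix k
  show "t * real k + r \<noteq> 0"
    using assms mult_left_mono [of 1 "real k" t] by (cases k) auto
qed

lemma fps_cubic_solution_unique:
  fixes w1 w2 z :: "'a::field fps"
  assumes "w1 = 1 + z * w1 ^ 3" and "w2 = 1 + z * w2 ^ 3" and "z $ 0 = 0"
  shows "w1 = w2"
proof -
  have "(w1 - w2) * (1 - z * (w1\<^sup>2 + w1 * w2 + w2\<^sup>2)) = 0"
    using assms(1,2) by algebra
  moreover have "(1 - z * (w1\<^sup>2 + w1 * w2 + w2\<^sup>2)) $ 0 = 1"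
    using assms(3) by simp
  then have "1 - z * (w1\<^sup>2 + w1 * w2 + w2\<^sup>2) \<noteq> 0"
    by (metis fps_zero_nth zero_neq_one)
  ultimately show ?thesis by simp
qed

lemma product_of_conjugate_solutions:
  fixes p q z :: "'a::idom"
  assumes "p\<^sup>2 = 1 + z * p ^ 3" and "q\<^sup>2 = 1 - z * q ^ 3" and "p + q \<noteq> 0"
  shows "p * q = 1 + z\<^sup>2 * (p * q) ^ 3"
proof -
  have "(p + q) * (p * q - (1 + z\<^sup>2 * (p * q) ^ 3)) = 0"
    using assms(1,2) by algebra
  then show ?thesis using assms(3) by simp
qed

lemma cubic_factor_by_roots:
  fixes x a b c :: "'a::field"
  assumes "x \<noteq> 0" and "a \<noteq> b" and "a \<noteq> c" and "b \<noteq> c"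
    and "poly [:1, -1, 0, x:] a = 0" and "poly [:1, -1, 0, x:] b = 0" and "poly [:1, -1, 0, x:] c = 0"
  shows "[:1, -1, 0, x:] = smult x ([:- a, 1:] * [:- b, 1:] * [:- c, 1:])"
proof -
  have ra: "1 - a + x * a ^ 3 = 0" and rb: "1 - b + x * b ^ 3 = 0" and rc: "1 - c + x * c ^ 3 = 0"
    using assms(5-7) by (simp_all add: algebra_simps power3_eq_cube)
  have "(a - b) * (x * (a\<^sup>2 + a * b + b\<^sup>2) - 1) = 0"
    using ra rb by algebra
  then have ab: "x * (a\<^sup>2 + a * b + b\<^sup>2) = 1"
    using assms(2) by simp
  have "(a - c) * (x * (a\<^sup>2 + a * c + c\<^sup>2) - 1) = 0"
    using ra rc by algebra
  then have ac: "x * (a\<^sup>2 + a * c + c\<^sup>2) = 1"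
    using assms(3) by simp
  have "(b - c) * (x * (a + b + c)) = 0"
    using ab ac by algebra
  then have sum: "a + b + c = 0"
    using assms(1,4) by simp
  have e2: "x * (a * b + b * c + c * a) = -1" and e3: "x * (a * b * c) = -1"
    using ab ra sum by algebra+
  show ?thesis
    using sum e2 e3 by (simp add: algebra_simps) algebra
qed

lemma inverse_solution_equation:
  fixes p c z :: "'a::comm_ring_1"
  assumes "p\<^sup>2 = 1 + z * p ^ 3" and "c * p = 1"
  shows "c = c ^ 3 + z"
proof -
  have "c = c * (c * p)\<^sup>2"
    by (simp add: assms(2))
  also have "\<dots> = c ^ 3 * p\<^sup>2"
    by (simp add: power2_eq_square power3_eq_cube algebra_simps)
  also have "\<dots> = c ^ 3 + z * (c * p) ^ 3"
    by (simp add: assms(1) power_mult_distrib algebra_simps)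
  finally show ?thesis
    by (simp add: assms(2))
qed

lemma fps_compose_cubic_equation:
  fixes g z :: "'a::field fps"
  assumes "g = 1 + fps_X * g ^ 3" and "z $ 0 = 0"
  shows "g oo z = 1 + z * (g oo z) ^ 3"
proof -
  have "g oo z = (1 + fps_X * g ^ 3) oo z"
    using assms(1) by simp
  then show ?thesis
    by (simp add: assms(2) fps_compose_power [OF assms(2), symmetric] fps_compose_add_distrib
        fps_compose_mult_distrib [OF assms(2)])
qed

lemma fps_cubic_equation_reflect:
  fixes c :: "'a::field fps"
  assumes "c = c ^ 3 + fps_X"
  shows "- (c oo - fps_X) = (- (c oo - fps_X)) ^ 3 + fps_X"
proof -
  have "c oo - fps_X = (c oo - fps_X) ^ 3 - fps_X"
    by (subst assms) (simp add: fps_compose_power [symmetric] fps_compose_add_distrib)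
  then show ?thesis
    by algebra
qed

lemma fps_cubic_solution_at_X_squared:
  fixes g p :: "'a::field_char_0 fps"
  assumes "g = 1 + fps_X * g ^ 3" and p: "p\<^sup>2 = 1 + fps_X * p ^ 3" and "p $ 0 = 1"
  shows "g oo fps_X\<^sup>2 = p * (p oo - fps_X)"
proof (rule fps_cubic_solution_unique)
  show "g oo fps_X\<^sup>2 = 1 + fps_X\<^sup>2 * (g oo fps_X\<^sup>2) ^ 3"
    using assms(1) by (rule fps_compose_cubic_equation) simp
  have mX: "(- fps_X :: 'a fps) $ 0 = 0"
    by simp
  have "p\<^sup>2 oo - fps_X = (1 + fps_X * p ^ 3) oo - fps_X"
    using p by simp
  then have q: "(p oo - fps_X)\<^sup>2 = 1 - fps_X * (p oo - fps_X) ^ 3"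
    by (simp add: fps_compose_power [OF mX, symmetric] fps_compose_add_distrib
        fps_compose_mult_distrib [OF mX])
  have "(p + (p oo - fps_X)) $ 0 = 2"
    using assms(3) by simp
  then have "p + (p oo - fps_X) \<noteq> 0"
    by (metis fps_zero_nth zero_neq_numeral)
  with p q show "p * (p oo - fps_X) = 1 + fps_X\<^sup>2 * (p * (p oo - fps_X)) ^ 3"
    by (rule product_of_conjugate_solutions)
qed (simp add: fps_compose_nth_0)

lemma fls_X_inv_root_of_cubic:
  fixes w :: "'a::field fps"
  assumes "w = w ^ 3 + fps_X"
  shows "poly [:1, -1, 0, fls_X\<^sup>2:] (fls_X_inv * fps_to_fls w) = 0"
proof -
  have "fps_to_fls w = fps_to_fls w ^ 3 + fls_X"
    by (subst assms) (simp add: fps_to_fls_power)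
  moreover have "fls_X_inv * fls_X = (1 :: 'a fls)"
    by (simp add: fls_inverse_X [symmetric])
  ultimately show ?thesis
    by simp algebra
qed

lemma fps_to_fls_root_of_cubic:
  fixes w :: "'a::field fps"
  assumes "w = 1 + fps_X\<^sup>2 * w ^ 3"
  shows "poly [:1, -1, 0, fls_X\<^sup>2:] (fps_to_fls w) = 0"
proof -
  have "fps_to_fls w = 1 + fls_X\<^sup>2 * fps_to_fls w ^ 3"
    by (subst assms) (simp add: fps_to_fls_power fls_times_fps_to_fls)
  then show ?thesis
    by simp algebra
qed

theorem mainTheorem10:
  fixes B3 s1 s2 :: "real fls" and x :: "real fls"
  defines "x \<equiv> fps_to_fls (fps_X ^ 2)"
    and "B3 \<equiv> fps_to_fls (gen_binom_series 3 1 oo fps_X ^ 2)"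
    and "s1 \<equiv> - (fls_X_inv * fps_to_fls (gen_binom_series (3/2) (-1/2) oo (- fps_X)))"
    and "s2 \<equiv> fls_X_inv * fps_to_fls (gen_binom_series (3/2) (-1/2))"
  shows "gen_binom_series 3 1 = 1 + fps_X * gen_binom_series 3 1 ^ 3 \<and>
         gen_binom_series 3 1 oo fps_X ^ 2 =
           gen_binom_series (3/2) (1/2) * (gen_binom_series (3/2) (1/2) oo (- fps_X)) \<and>
         poly [:1, -1, 0, x:] s1 = 0 \<and>
         poly [:1, -1, 0, x:] s2 = 0 \<and>
         [:1, -1, 0, x:] = smult x ([:- B3, 1:] * [:- s1, 1:] * [:- s2, 1:])"
proof -
  (* The series variable stands for x^(1/2), so the x of the statement is fps_X^2. *)
  define G P C where "G = gen_binom_fps 3 1" and "P = gen_binom_fps (3/2) (1/2)"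
    and "C = gen_binom_fps (3/2) (-1/2)"
  have series: "gen_binom_series 3 1 = G" "gen_binom_series (3/2) (1/2) = P"
    "gen_binom_series (3/2) (-1/2) = C"
    unfolding G_def P_def C_def by (intro gen_binom_series_eq_fps_nonneg; simp)+
  have G: "G = 1 + fps_X * G ^ 3"
    using gen_binom_fps_equation [of 3 1 3 1] by (simp add: G_def)
  have P: "P\<^sup>2 = 1 + fps_X * P ^ 3"
    using gen_binom_fps_equation [of 3 "1/2" "3/2" 2] by (simp add: P_def)
  have P0: "P $ 0 = 1"
    by (simp add: P_def)
  have C: "C = C ^ 3 + fps_X"
    using P by (rule inverse_solution_equation)
      (simp add: C_def P_def gen_binom_fps_add [symmetric] gen_binom_fps_0)
  have D: "- (C oo - fps_X) = (- (C oo - fps_X)) ^ 3 + fps_X"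
    using C by (rule fps_cubic_equation_reflect)
  have x: "x = fls_X\<^sup>2"
    by (simp add: x_def fps_to_fls_power)
  have root1: "poly [:1, -1, 0, x:] s1 = 0"
    using fls_X_inv_root_of_cubic [OF D] unfolding s1_def series x by simp
  have root2: "poly [:1, -1, 0, x:] s2 = 0"
    using fls_X_inv_root_of_cubic [OF C] unfolding s2_def series x by simp
  have root3: "poly [:1, -1, 0, x:] B3 = 0"
    using fps_to_fls_root_of_cubic [OF fps_compose_cubic_equation [OF G]]
    unfolding B3_def series x by simp
  have "fls_nth B3 (-1) = 0" "fls_nth s1 (-1) = -1" "fls_nth s2 (-1) = 1"
    unfolding B3_def s1_def s2_def series by (simp_all add: fls_X_inv_times_conv_shift C_def)
  then have "[:1, -1, 0, x:] = smult x ([:- B3, 1:] * [:- s1, 1:] * [:- s2, 1:])"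
    using root1 root2 root3 by (intro cubic_factor_by_roots) (auto simp: x)
  then show ?thesis
    using G fps_cubic_solution_at_X_squared [OF G P P0] root1 root2 unfolding series
    by simp
qed

end
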